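(* Let $\mathbf{x}=(\mathbf{x}_1,\dots,\mathbf{x}_n)$ and $\mathbf{y}=(\mathbf{y}_1,\dots,\mathbf{y}_n)$ be Generalized Nash equilibria of $G^{(2)}$ such that $\mathbf{x}_T^{(j)}\le\mathbf{y}_T^{(j)}$ for all $j\in[m]$. Then: (1) if $i\in\mathcal{T}_I(\mathbf{x})$, then $J_{\mathbf{y}_{-i}}\subset J_{\mathbf{x}_{-i}}$; (2) $\mathcal{T}_I(\mathbf{x})\subset\mathcal{T}_I(\mathbf{y})$.
   Context: $G^{(2)}$ is a Fragile multi-CPR Game: $n,m\ge1$, $[k]=\{1,\dots,k\}$, $C_m=\{(x_1,\dots,x_m)\in[0,1]^m:\sum_j x_j\le1\}$, $\mathcal{C}_n=\prod_{i\in[n]}C_m$, $\mathcal{C}_{-i}=\prod_{[n]\setminus\{i\}}C_m$. A profile is $\mathbf{x}=(\mathbf{x}_1,\dots,\mathbf{x}_n)$, $\mathbf{x}_i=(x_{i1},\dots,x_{im})$; write $\mathbf{x}=(\mathbf{x}_i,\mathbf{x}_{-i})$; $\mathbf{x}_T^{(j)}=\sum_i x_{ij}$, $\mathbf{x}_T^{j|i}=\sum_{\ell\ne i}x_{\ell j}$ (similarly for $\mathbf{y}$). Each CPR $j$ has return rate $\mathcal{R}_j(t)>1$ and failure probability $p_j(t)\in[0,1]$; each player $i$ has parameters $a_i,k_i$. $\mathcal{F}_{ij}(t)=(\mathcal{R}_j(t)-1)^{a_i}(1-p_j(t))-k_ip_j(t)$; utility $\mathcal{V}_i(\mathbf{x}_i;\mathbf{x}_{-i})=\sum_j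 x_{ij}^{a_i}\mathcal{F}_{ij}(\mathbf{x}_T^{(j)})$. Assumption: (1) $p_j(0)=0$, $p_j(t)=1$ for $t\ge1$; (2) $a_i\in(0,1]$, $k_i>0$; (3) each $\mathcal{F}_{ij}$ (continuous on $[0,1]$) has strictly negative first and second derivatives on $(0,1)$. $\omega_{ij}\in(0,1)$ is the unique zero of $\mathcal{F}_{ij}$ in $(0,1)$. $A(\mathbf{x}_{-i})=\{j:\mathbf{x}_T^{j|i}<\omega_{ij}\}$. $\vartheta_i(\mathbf{x}_{-i})=C_m\cap\big(\prod_{j\in A(\mathbf{x}_{-i})}[0,\omega_{ij}-\mathbf{x}_T^{j|i}]\times\prod_{j\notin A(\mathbf{x}_{-i})}\{0\}\big)$. A Generalized Nash equilibrium is $\mathbf{x}\in\mathcal{C}_n$ with, for all $i$, $\mathbf{x}_i\in\vartheta_i(\mathbf{x}_{-i})$ and $\mathcal{V}_i(\mathbf{x}_i;\mathbf{x}_{-i})\ge\mathcal{V}_i(\mathbf{z};\mathbf{x}_{-i})$ for all $\mathbf{z}\in\vartheta_i(\mathbf{x}_{-i})$. $\psi_{ij}(x;s)=x\,\mathcal{F}_{ij}'(x+s)+a_i\mathcal{F}_{ij}(x+s)$. For a GNE $\mathbf{x}$: $J_{\mathbf{x}_{-i}}=\{j\in A(\mathbf{x}_{-i}):x_{ij}\ne0\}$; $\mathbf{x}_i$ is of Type I if $\sum_{j\in J_{\mathbf{x}_{-i}}}x_{ij}<1$ and $\psi_{ij}(x_{ij};\mathbf{x}_T^{j|i})=0$ for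 all $j\in J_{\mathbf{x}_{-i}}$; of Type II if $\sum_{j\in J_{\mathbf{x}_{-i}}}x_{ij}=1$ and there is $\kappa_0\ge0$ with $x_{ij}^{a_i-1}\psi_{ij}(x_{ij};\mathbf{x}_T^{j|i})=\kappa_0$ for all $j\in J_{\mathbf{x}_{-i}}$. $\mathcal{T}_I(\mathbf{x})=\{i\in[n]:\mathbf{x}_i\text{ is of Type I}\}$. *)

theory Defs
  imports "HOL-Analysis.Analysis"
begin

(* Players are indexed by {..<n}, CPRs by {..<m}.
   A profile is x :: nat => nat => real, x i j = investment of player i in CPR j.
   R j t : return rate of CPR j, p j t : failure probability of CPR j,
   a i, k i : player parameters. *)

definition Fij :: "(nat \<Rightarrow> real \<Rightarrow> real) \<Rightarrow> (nat \<Rightarrow> real \<Rightarrow> real) \<Rightarrow> (nat \<Rightarrow> real) \<Rightarrow> (nat \<Rightarrow> real)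
                   \<Rightarrow> nat \<Rightarrow> nat \<Rightarrow> real \<Rightarrow> real" where
  "Fij R p a k i j t = (R j t - 1) powr (a i) * (1 - p j t) - k i * p j t"

definition fragile_game :: "nat \<Rightarrow> nat \<Rightarrow> (nat \<Rightarrow> real \<Rightarrow> real) \<Rightarrow> (nat \<Rightarrow> real \<Rightarrow> real)
                   \<Rightarrow> (nat \<Rightarrow> real) \<Rightarrow> (nat \<Rightarrow> real) \<Rightarrow> bool" where
  "fragile_game n m R p a k \<longleftrightarrow>
     n \<ge> 1 \<and> m \<ge> 1 \<and>
     (\<forall>j<m. \<forall>t\<ge>0. R j t > 1 \<and> 0 \<le> p j t \<and> p j t \<le> 1) \<and>
     (\<forall>j<m. p j 0 = 0 \<and> (\<forall>t\<ge>1. p j t = 1)) \<and>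
     (\<forall>i<n. 0 < a i \<and> a i \<le> 1 \<and> k i > 0) \<and>
     (\<forall>i<n. \<forall>j<m. continuous_on {0..1} (Fij R p a k i j) \<and>
        (\<forall>t\<in>{0<..<1}. Fij R p a k i j differentiable (at t) \<and>
                        deriv (Fij R p a k i j) differentiable (at t) \<and>
                        deriv (Fij R p a k i j) t < 0 \<and>
                        deriv (deriv (Fij R p a k i j)) t < 0))"

definition omega where
  "omega R p a k i j = (THE w. w \<in> {0<..<1} \<and> Fij R p a k i j w = 0)"

definition simplexC :: "nat \<Rightarrow> (nat \<Rightarrow> real) \<Rightarrow> bool" where
  "simplexC m v \<longleftrightarrow> (\<forall>j<m. 0 \<le> v j \<and> v j \<le> 1) \<and> (\<Sum>j<m. v j) \<le> 1"

definition totalT :: "nat \<Rightarrow> (nat \<Rightarrow> nat \<Rightarrow> real) \<Rightarrow> nat \<Rightarrow> real" where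
  "totalT n x j = (\<Sum>l<n. x l j)"

definition totalT_except :: "nat \<Rightarrow> (nat \<Rightarrow> nat \<Rightarrow> real) \<Rightarrow> nat \<Rightarrow> nat \<Rightarrow> real" where
  "totalT_except n x i j = (\<Sum>l\<in>{..<n} - {i}. x l j)"

definition utilV where
  "utilV n m R p a k x i z =
     (\<Sum>j<m. z j powr (a i) * Fij R p a k i j (z j + totalT_except n x i j))"

definition activeA where
  "activeA n m R p a k x i = {j. j < m \<and> totalT_except n x i j < omega R p a k i j}"

definition thetaSet where
  "thetaSet n m R p a k x i =
     {z. simplexC m z \<and>
         (\<forall>j<m. (j \<in> activeA n m R p a k x i \<longrightarrow> 0 \<le> z j \<and> z j \<le> omega R p a k i j - totalT_except n x i j)
               \<and> (j \<notin> activeA n m R p a k x i \<longrightarrow> z j = 0))}"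

definition is_GNE where
  "is_GNE n m R p a k x \<longleftrightarrow>
     (\<forall>i<n. simplexC m (x i)) \<and>
     (\<forall>i<n. x i \<in> thetaSet n m R p a k x i \<and>
            (\<forall>z\<in>thetaSet n m R p a k x i. utilV n m R p a k x i (x i) \<ge> utilV n m R p a k x i z))"

definition psi where
  "psi R p a k i j y s = y * deriv (Fij R p a k i j) (y + s) + a i * Fij R p a k i j (y + s)"

definition Jset where
  "Jset n m R p a k x i = {j \<in> activeA n m R p a k x i. x i j \<noteq> 0}"

definition typeI where
  "typeI n m R p a k x i \<longleftrightarrow>
     (\<Sum>j\<in>Jset n m R p a k x i. x i j) < 1 \<and>
     (\<forall>j\<in>Jset n m R p a k x i. psi R p a k i j (x i j) (totalT_except n x i j) = 0)"

definition TI where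
  "TI n m R p a k x = {i. i < n \<and> typeI n m R p a k x i}"

end

theory Submission
  imports Defs
begin

(* At an equilibrium, each coordinate x_ij of an active CPR maximises the one-dimensional
   payoff v powr a_i * F_ij(v + s) over the feasible interval, and the derivative of this
   payoff at v > 0 is v powr (a_i - 1) * psi_ij(v; s).  Hence psi_ij >= 0 on J, with
   equality when player i has budget slack; such a player also invests in every active
   CPR, because F_ij > 0 below omega_ij.  As F_ij is decreasing and concave, psi_ij(v; s)
   strictly decreases when v grows and v + s does not decrease.  If x_i is of Type I and
   the totals of y dominate those of x, every CPR in J(y_-i) is therefore active for i at
   x, so lies in J(x_-i), and there y_ij <= x_ij.  Thus i keeps budget slack at y, and
   psi_ij = 0 on J(y_-i): y_i is of Type I. *)

lemma deriv_neg_imp_decreasing: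
  fixes f :: "real \<Rightarrow> real"
  assumes "continuous_on {lo..hi} f"
    and "\<forall>t\<in>{lo<..<hi}. f differentiable (at t) \<and> deriv f t < 0"
    and "lo \<le> u" "u < v" "v \<le> hi"
  shows "f v < f u"
proof (rule DERIV_neg_imp_decreasing_open[OF \<open>u < v\<close>])
  fix t assume "u < t" "t < v"
  then have "t \<in> {lo<..<hi}" using assms(3,5) by simp
  then show "\<exists>l. DERIV f t :> l \<and> l < 0"
    using assms(2) DERIV_deriv_iff_real_differentiable by blast
next
  show "continuous_on {u..v} f"
    using assms(1) by (rule continuous_on_subset) (use assms(3,5) in simp)
qed

lemma deriv2_neg_imp_deriv_antimono:
  fixes f :: "real \<Rightarrow> real"
  assumes "\<forall>t\<in>{lo<..<hi}. deriv f differentiable (at t) \<and> deriv (deriv f) t < 0"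
    and "lo < u" "u \<le> v" "v < hi"
  shows "deriv f v \<le> deriv f u"
proof (cases "u = v")
  case False
  then have "u < v" using assms(3) by simp
  have sub: "{u..v} \<subseteq> {lo<..<hi}" using assms(2,4) by auto
  have "continuous_on {u..v} (deriv f)"
    using assms(1) sub
    by (intro continuous_at_imp_continuous_on) (blast intro: differentiable_imp_continuous_within)
  moreover have "\<forall>t\<in>{u<..<v}. deriv f differentiable (at t) \<and> deriv (deriv f) t < 0"
    using assms(1) sub greaterThanLessThan_subseteq_atLeastAtMost_iff by blast
  ultimately have "deriv f v < deriv f u"
    using deriv_neg_imp_decreasing \<open>u < v\<close> by blast
  then show ?thesis by simp
qed simp

lemma has_real_derivative_powr_times_shifted:
  fixes f :: "real \<Rightarrow> real"
  assumes "f differentiable (at (v + s))" "0 < v"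
  shows "((\<lambda>z. z powr c * f (z + s)) has_real_derivative
            v powr (c - 1) * (v * deriv f (v + s) + c * f (v + s))) (at v)"
proof -
  have "((\<lambda>z. z + s) has_real_derivative 1) (at v)"
    by (auto intro!: derivative_eq_intros)
  then have "((\<lambda>z. f (z + s)) has_real_derivative deriv f (v + s)) (at v)"
    using DERIV_chain2[of f "deriv f (v + s)" "\<lambda>z. z + s" v 1] assms(1)
    by (simp add: DERIV_deriv_iff_real_differentiable)
  from DERIV_mult[OF has_real_derivative_powr[OF \<open>0 < v\<close>] this]
  have "((\<lambda>z. z powr c * f (z + s)) has_real_derivative
          c * v powr (c - 1) * f (v + s) + deriv f (v + s) * v powr c) (at v)" .
  moreover have "v powr c = v powr (c - 1) * v"
    using \<open>0 < v\<close> by (simp add: powr_diff)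
  ultimately show ?thesis by (simp add: algebra_simps)
qed

lemma DERIV_nonneg_if_left_local_max:
  fixes g :: "real \<Rightarrow> real"
  assumes "DERIV g y :> D" "0 < e" "\<And>v. y - e \<le> v \<Longrightarrow> v \<le> y \<Longrightarrow> g v \<le> g y"
  shows "0 \<le> D"
proof (rule ccontr)
  assume "\<not> 0 \<le> D"
  then obtain d where "0 < d" and d: "\<forall>h>0. h < d \<longrightarrow> g y < g (y - h)"
    using DERIV_neg_dec_left[OF assms(1)] by auto
  define h where "h = min d e / 2"
  have h: "0 < h" "h < d" "h \<le> e"
    using \<open>0 < d\<close> assms(2) by (auto simp: h_def)
  then have "g y < g (y - h)" using d by blast
  moreover have "g (y - h) \<le> g y" using assms(3) h by simp
  ultimately show False by simp
qed

lemma DERIV_nonpos_if_right_local_max: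
  fixes g :: "real \<Rightarrow> real"
  assumes "DERIV g y :> D" "0 < e" "\<And>v. y \<le> v \<Longrightarrow> v \<le> y + e \<Longrightarrow> g v \<le> g y"
  shows "D \<le> 0"
proof (rule ccontr)
  assume "\<not> D \<le> 0"
  then obtain d where "0 < d" and d: "\<forall>h>0. h < d \<longrightarrow> g y < g (y + h)"
    using DERIV_pos_inc_right[OF assms(1)] by auto
  define h where "h = min d e / 2"
  have h: "0 < h" "h < d" "h \<le> e"
    using \<open>0 < d\<close> assms(2) by (auto simp: h_def)
  then have "g y < g (y + h)" using d by blast
  moreover have "g (y + h) \<le> g y" using assms(3) h by simp
  ultimately show False by simp
qed

lemma sum_fun_upd:
  fixes h :: "'a \<Rightarrow> 'b \<Rightarrow> 'c::ab_group_add"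
  assumes "finite A" "j \<in> A"
  shows "(\<Sum>l\<in>A. h l ((w(j := c)) l)) = (\<Sum>l\<in>A. h l (w l)) - h j (w j) + h j c"
proof -
  have "(\<Sum>l\<in>A - {j}. h l ((w(j := c)) l)) = (\<Sum>l\<in>A - {j}. h l (w l))"
    by (rule sum.cong) auto
  then show ?thesis
    using sum.remove[OF assms, of "\<lambda>l. h l ((w(j := c)) l)"] sum.remove[OF assms, of "\<lambda>l. h l (w l)"]
    by simp
qed

locale cpr_game =
  fixes n m :: nat and R p :: "nat \<Rightarrow> real \<Rightarrow> real" and a k :: "nat \<Rightarrow> real"
begin

abbreviation "F \<equiv> Fij R p a k"
abbreviation "\<omega> \<equiv> omega R p a k"
abbreviation "\<psi> \<equiv> psi R p a k"
abbreviation "GNE \<equiv> is_GNE n m R p a k"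
abbreviation "others \<equiv> totalT_except n"
abbreviation "active \<equiv> activeA n m R p a k"
abbreviation "J \<equiv> Jset n m R p a k"
abbreviation "type_I \<equiv> typeI n m R p a k"

lemma GNE_simplex:
  assumes "GNE x" "i < n"
  shows "\<And>j. j < m \<Longrightarrow> 0 \<le> x i j \<and> x i j \<le> 1" "(\<Sum>j<m. x i j) \<le> 1"
  using assms unfolding is_GNE_def simplexC_def by auto

lemma GNE_others_nonneg: "GNE x \<Longrightarrow> j < m \<Longrightarrow> 0 \<le> others x i j"
  unfolding totalT_except_def using GNE_simplex by (auto intro: sum_nonneg)

lemma totalT_split: "i < n \<Longrightarrow> totalT n x j = x i j + others x i j"
  unfolding totalT_def totalT_except_def by (simp add: sum.remove)

lemma GNE_feasible:
  assumes "GNE x" "i < n"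
  shows "\<And>j. j < m \<Longrightarrow> j \<notin> active x i \<Longrightarrow> x i j = 0"
    and "\<And>j. j \<in> active x i \<Longrightarrow> x i j \<le> \<omega> i j - others x i j"
  using assms unfolding is_GNE_def thetaSet_def activeA_def by auto

lemma J_subset_lessThan: "J x i \<subseteq> {..<m}"
  unfolding Jset_def activeA_def by auto

lemma GNE_sum_over_J:
  assumes "GNE x" "i < n"
  shows "(\<Sum>j<m. x i j) = (\<Sum>j\<in>J x i. x i j)"
  using GNE_feasible[OF assms] J_subset_lessThan
  by (intro sum.mono_neutral_right) (auto simp: Jset_def)

lemma type_I_slack: "GNE x \<Longrightarrow> i < n \<Longrightarrow> type_I x i \<Longrightarrow> (\<Sum>l<m. x i l) < 1"
  using GNE_sum_over_J unfolding typeI_def by simp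

lemma GNE_coordinate_optimal:
  assumes "GNE y" "i < n" "j \<in> active y i"
    and "0 \<le> v" "v \<le> \<omega> i j - others y i j" "(\<Sum>l<m. y i l) - y i j + v \<le> 1"
  shows "v powr a i * F i j (v + others y i j) \<le> y i j powr a i * F i j (y i j + others y i j)"
proof -
  have j: "j \<in> {..<m}" using assms(3) unfolding activeA_def by simp
  define z where "z = (y i)(j := v)"
  have sum_z: "(\<Sum>l<m. z l) = (\<Sum>l<m. y i l) - y i j + v"
    unfolding z_def using sum_fun_upd[OF _ j, of "\<lambda>_ u. u"] by simp
  have "y i j \<le> (\<Sum>l<m. y i l)"
    using GNE_simplex[OF assms(1,2)] j by (intro member_le_sum) auto
  then have "z \<in> thetaSet n m R p a k y i"
    using assms sum_z GNE_simplex[OF assms(1,2)] unfolding is_GNE_def thetaSet_def simplexC_def z_def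
    by auto
  then have "utilV n m R p a k y i z \<le> utilV n m R p a k y i (y i)"
    using assms(1,2) unfolding is_GNE_def by blast
  then show ?thesis
    unfolding utilV_def z_def
    using sum_fun_upd[OF _ j, of "\<lambda>l u. u powr a i * F i l (u + others y i l)" "y i" v] by simp
qed

end

locale fragile_cpr_game = cpr_game +
  assumes fragile: "fragile_game n m R p a k"
begin

lemma F_regular:
  assumes "i < n" "j < m"
  shows "continuous_on {0..1} (F i j)"
    and "\<forall>t\<in>{0<..<1}. F i j differentiable (at t) \<and> deriv (F i j) t < 0"
    and "\<forall>t\<in>{0<..<1}. deriv (F i j) differentiable (at t) \<and> deriv (deriv (F i j)) t < 0"
  using fragile assms unfolding fragile_game_def by auto

lemma F_strict_antimono:
  "i < n \<Longrightarrow> j < m \<Longrightarrow> 0 \<le> u \<Longrightarrow> u < v \<Longrightarrow> v \<le> 1 \<Longrightarrow> F i j v < F i j u"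
  using deriv_neg_imp_decreasing[OF F_regular(1,2)] by blast

lemma deriv_F_antimono:
  "i < n \<Longrightarrow> j < m \<Longrightarrow> 0 < u \<Longrightarrow> u \<le> v \<Longrightarrow> v < 1 \<Longrightarrow> deriv (F i j) v \<le> deriv (F i j) u"
  using deriv2_neg_imp_deriv_antimono[OF F_regular(3)] by blast

lemma F_at_0: "i < n \<Longrightarrow> j < m \<Longrightarrow> 0 < F i j 0"
  using fragile unfolding fragile_game_def Fij_def by force

lemma F_at_1: "i < n \<Longrightarrow> j < m \<Longrightarrow> F i j 1 < 0"
  using fragile unfolding fragile_game_def Fij_def by force

lemma omega_root:
  assumes "i < n" "j < m"
  shows "0 < \<omega> i j" "\<omega> i j < 1" "F i j (\<omega> i j) = 0"
proof -
  obtain w where "0 \<le> w" "w \<le> 1" "F i j w = 0"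
    using IVT2'[of "F i j" 1 0 0] F_at_0[OF assms] F_at_1[OF assms] F_regular(1)[OF assms] by force
  then have w: "w \<in> {0<..<1} \<and> F i j w = 0"
    using F_at_0[OF assms] F_at_1[OF assms] by (cases "w = 0"; cases "w = 1") auto
  have "\<omega> i j = w"
    unfolding omega_def
  proof (rule the_equality)
    show "w \<in> {0<..<1} \<and> F i j w = 0" by (fact w)
  next
    fix w' assume w': "w' \<in> {0<..<1} \<and> F i j w' = 0"
    show "w' = w"
      using F_strict_antimono[OF assms, of w w'] F_strict_antimono[OF assms, of w' w] w w'
      by (cases w w' rule: linorder_cases) auto
  qed
  with w show "0 < \<omega> i j" "\<omega> i j < 1" "F i j (\<omega> i j) = 0" by auto
qed

lemma F_pos_below_omega:
  "i < n \<Longrightarrow> j < m \<Longrightarrow> 0 \<le> t \<Longrightarrow> t < \<omega> i j \<Longrightarrow> 0 < F i j t"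
  using F_strict_antimono[of i j t "\<omega> i j"] omega_root[of i j] by simp

lemma J_interior:
  assumes "GNE y" "i < n" "j \<in> J y i"
  shows "j < m" "0 < y i j" "y i j + others y i j < \<omega> i j"
proof -
  have act: "j \<in> active y i" and "y i j \<noteq> 0" using assms(3) unfolding Jset_def by auto
  then show j: "j < m" unfolding activeA_def by simp
  show pos: "0 < y i j" using GNE_simplex(1)[OF assms(1,2) j] \<open>y i j \<noteq> 0\<close> by simp
  have s: "0 \<le> others y i j" using GNE_others_nonneg[OF assms(1) j] .
  have le: "y i j + others y i j \<le> \<omega> i j" using GNE_feasible(2)[OF assms(1,2) act] by simp
  show "y i j + others y i j < \<omega> i j"
  proof (rule ccontr)
    assume "\<not> ?thesis"
    with le have "y i j + others y i j = \<omega> i j" by simp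
    \<comment> \<open>then investing only half of \<open>y i j\<close> would earn a positive instead of a zero payoff\<close>
    then have "y i j powr a i * F i j (y i j + others y i j) = 0"
      using omega_root(3)[OF assms(2) j] by simp
    moreover have "0 < (y i j / 2) powr a i * F i j (y i j / 2 + others y i j)"
      using F_pos_below_omega[OF assms(2) j] pos s le by simp
    moreover have "(y i j / 2) powr a i * F i j (y i j / 2 + others y i j)
        \<le> y i j powr a i * F i j (y i j + others y i j)"
      using GNE_coordinate_optimal[OF assms(1,2) act] pos le GNE_simplex(2)[OF assms(1,2)] by simp
    ultimately show False by linarith
  qed
qed

lemma payoff_has_derivative_psi:
  assumes "GNE y" "i < n" "j \<in> J y i"
  shows "((\<lambda>v. v powr a i * F i j (v + others y i j)) has_real_derivative
           y i j powr (a i - 1) * \<psi> i j (y i j) (others y i j)) (at (y i j))"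
proof -
  note y = J_interior[OF assms]
  have "y i j + others y i j \<in> {0<..<1}"
    using omega_root(2)[OF assms(2) y(1)] y GNE_others_nonneg[OF assms(1) y(1), where i = i] by simp
  then have "F i j differentiable (at (y i j + others y i j))"
    using F_regular(2)[OF assms(2) y(1)] by blast
  from has_real_derivative_powr_times_shifted[OF this y(2)] show ?thesis
    unfolding psi_def .
qed

lemma psi_nonneg_on_J:
  assumes "GNE y" "i < n" "j \<in> J y i"
  shows "0 \<le> \<psi> i j (y i j) (others y i j)"
proof -
  note y = J_interior[OF assms]
  have act: "j \<in> active y i" using assms(3) unfolding Jset_def by simp
  have "0 \<le> y i j powr (a i - 1) * \<psi> i j (y i j) (others y i j)"
  proof (rule DERIV_nonneg_if_left_local_max[OF payoff_has_derivative_psi[OF assms] y(2)])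
    fix v assume "y i j - y i j \<le> v" "v \<le> y i j"
    then show "v powr a i * F i j (v + others y i j) \<le> y i j powr a i * F i j (y i j + others y i j)"
      using GNE_coordinate_optimal[OF assms(1,2) act] y GNE_simplex(2)[OF assms(1,2)] by simp
  qed
  then show ?thesis using y(2) by (simp add: zero_le_mult_iff)
qed

lemma psi_nonpos_on_J_if_slack:
  assumes "GNE y" "i < n" "j \<in> J y i" "(\<Sum>l<m. y i l) < 1"
  shows "\<psi> i j (y i j) (others y i j) \<le> 0"
proof -
  note y = J_interior[OF assms(1-3)]
  have act: "j \<in> active y i" using assms(3) unfolding Jset_def by simp
  define e where "e = min (\<omega> i j - others y i j - y i j) (1 - (\<Sum>l<m. y i l))"
  have "0 < e" using y assms(4) unfolding e_def by simp
  have "y i j powr (a i - 1) * \<psi> i j (y i j) (others y i j) \<le> 0"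
  proof (rule DERIV_nonpos_if_right_local_max[OF payoff_has_derivative_psi[OF assms(1-3)] \<open>0 < e\<close>])
    fix v assume "y i j \<le> v" "v \<le> y i j + e"
    then show "v powr a i * F i j (v + others y i j) \<le> y i j powr a i * F i j (y i j + others y i j)"
      using GNE_coordinate_optimal[OF assms(1,2) act] y unfolding e_def by simp
  qed
  then show ?thesis using y(2) by (simp add: mult_le_0_iff)
qed

lemma active_in_J_if_slack:
  assumes "GNE x" "i < n" "(\<Sum>l<m. x i l) < 1" "j \<in> active x i"
  shows "j \<in> J x i"
proof (rule ccontr)
  assume "j \<notin> J x i"
  with assms(4) have "x i j = 0" unfolding Jset_def by simp
  have j: "j < m" using assms(4) unfolding activeA_def by simp
  have s: "0 \<le> others x i j" "others x i j < \<omega> i j"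
    using GNE_others_nonneg[OF assms(1) j] assms(4) unfolding activeA_def by auto
  \<comment> \<open>any small investment in an active CPR earns a positive payoff\<close>
  define v where "v = min (\<omega> i j - others x i j) (1 - (\<Sum>l<m. x i l)) / 2"
  have v: "0 < v" "v < \<omega> i j - others x i j" "v \<le> 1 - (\<Sum>l<m. x i l)"
    using s assms(3) unfolding v_def by auto
  have "0 < v powr a i * F i j (v + others x i j)"
    using F_pos_below_omega[OF assms(2) j] v s by simp
  also have "\<dots> \<le> x i j powr a i * F i j (x i j + others x i j)"
    using GNE_coordinate_optimal[OF assms(1,2,4)] v \<open>x i j = 0\<close> by simp
  finally show False using \<open>x i j = 0\<close> by simp
qed

lemma psi_strict_antimono:
  assumes "i < n" "j < m" "0 \<le> u" "u < v" "0 < u + s" "u + s \<le> v + t" "v + t < 1"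
  shows "\<psi> i j v t < \<psi> i j u s"
proof -
  let ?F' = "deriv (F i j)"
  have "?F' (v + t) < 0" using F_regular(2)[OF assms(1,2)] assms(5-7) by simp
  then have "v * ?F' (v + t) < u * ?F' (v + t)" by (rule mult_strict_right_mono_neg[OF assms(4)])
  also have "\<dots> \<le> u * ?F' (u + s)"
    using deriv_F_antimono[OF assms(1,2,5,6,7)] assms(3) by (rule mult_left_mono)
  finally have "v * ?F' (v + t) < u * ?F' (u + s)" .
  moreover have "F i j (v + t) \<le> F i j (u + s)"
    using F_strict_antimono[OF assms(1,2), of "u + s" "v + t"] assms(5-7) by (cases "u + s = v + t") auto
  moreover have "0 < a i" using fragile assms(1) unfolding fragile_game_def by simp
  ultimately have "a i * F i j (v + t) \<le> a i * F i j (u + s)" by simp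
  with \<open>v * ?F' (v + t) < u * ?F' (u + s)\<close> show ?thesis unfolding psi_def by simp
qed

lemma J_subset_if_slack:
  assumes "GNE x" "GNE y" "\<forall>j<m. totalT n x j \<le> totalT n y j" "i < n" "(\<Sum>l<m. x i l) < 1"
  shows "J y i \<subseteq> J x i"
proof
  fix j assume "j \<in> J y i"
  note y = J_interior[OF assms(2,4) this]
  have "others x i j \<le> totalT n x j"
    using totalT_split[OF assms(4)] GNE_simplex(1)[OF assms(1,4) y(1)] by simp
  also have "\<dots> \<le> totalT n y j" using assms(3) y(1) by simp
  also have "\<dots> < \<omega> i j" using totalT_split[OF assms(4)] y(3) by simp
  finally have "j \<in> active x i" unfolding activeA_def using y(1) by simp
  then show "j \<in> J x i" using active_in_J_if_slack[OF assms(1,4,5)] by blast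
qed

lemma le_on_J_if_type_I:
  assumes "GNE x" "GNE y" "\<forall>j<m. totalT n x j \<le> totalT n y j" "i < n" "type_I x i"
    and "j \<in> J y i"
  shows "y i j \<le> x i j"
proof (rule ccontr)
  assume "\<not> y i j \<le> x i j"
  have "j \<in> J x i"
    using J_subset_if_slack[OF assms(1-4) type_I_slack[OF assms(1,4,5)]] assms(6) by blast
  note x = J_interior[OF assms(1,4) this] and y = J_interior[OF assms(2,4,6)]
  have "x i j + others x i j \<le> y i j + others y i j"
    using assms(3) x(1) totalT_split[OF assms(4)] by metis
  moreover have "y i j + others y i j < 1" using y omega_root(2)[OF assms(4) y(1)] by simp
  ultimately have "\<psi> i j (y i j) (others y i j) < \<psi> i j (x i j) (others x i j)"
    using psi_strict_antimono[OF assms(4) x(1)] x(2) GNE_others_nonneg[OF assms(1) x(1), where i = i]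
      \<open>\<not> y i j \<le> x i j\<close> by simp
  also have "\<dots> = 0" using assms(5) \<open>j \<in> J x i\<close> unfolding typeI_def by simp
  finally show False using psi_nonneg_on_J[OF assms(2,4,6)] by simp
qed

lemma type_I_preserved:
  assumes "GNE x" "GNE y" "\<forall>j<m. totalT n x j \<le> totalT n y j" "i < n" "type_I x i"
  shows "type_I y i"
proof -
  have J: "J y i \<subseteq> J x i"
    using J_subset_if_slack[OF assms(1-4) type_I_slack[OF assms(1,4,5)]] .
  have "(\<Sum>j\<in>J y i. y i j) \<le> (\<Sum>j\<in>J y i. x i j)"
    using le_on_J_if_type_I[OF assms] by (rule sum_mono)
  also have "\<dots> \<le> (\<Sum>j\<in>J x i. x i j)"
    using J J_subset_lessThan[of x i] GNE_simplex(1)[OF assms(1,4)]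
    by (intro sum_mono2) (auto intro: finite_subset)
  also have "\<dots> < 1" using assms(5) unfolding typeI_def by simp
  finally have slack: "(\<Sum>j\<in>J y i. y i j) < 1" .
  then have "\<forall>j\<in>J y i. \<psi> i j (y i j) (others y i j) = 0"
    using psi_nonneg_on_J[OF assms(2,4)] psi_nonpos_on_J_if_slack[OF assms(2,4)]
      GNE_sum_over_J[OF assms(2,4)] by (simp add: order_antisym)
  with slack show ?thesis unfolding typeI_def by simp
qed

end

theorem lemma6:
  fixes n m :: nat and R p :: "nat \<Rightarrow> real \<Rightarrow> real" and a k :: "nat \<Rightarrow> real"
    and x y :: "nat \<Rightarrow> nat \<Rightarrow> real"
  assumes "fragile_game n m R p a k"
    and "is_GNE n m R p a k x" and "is_GNE n m R p a k y"
    and "\<forall>j<m. totalT n x j \<le> totalT n y j"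
  shows "(\<forall>i\<in>TI n m R p a k x. Jset n m R p a k y i \<subseteq> Jset n m R p a k x i)
         \<and> TI n m R p a k x \<subseteq> TI n m R p a k y"
proof -
  interpret fragile_cpr_game n m R p a k
    by unfold_locales (fact assms(1))
  show ?thesis
    using J_subset_if_slack[OF assms(2-4)] type_I_slack[OF assms(2)] type_I_preserved[OF assms(2-4)]
    unfolding TI_def by blast
qed

end
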